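(* Let $G$ be the infinite triangular grid. The code $C=\{v(i,j)\mid i\equiv 0 \pmod 2,\ j\equiv 0\pmod 2\}$ is self-locating-dominating in $G$, and therefore also solid-locating-dominating. The density of $C$ equals $1/4$, and there exists no self-locating-dominating code and no solid-locating-dominating code in $G$ with density smaller than $1/4$.
   Context: The infinite triangular grid $G=(V,E)$ has vertex set $V=\{v(i,j)\mid i,j\in\mathbb{Z}\}$ where $v(i,j)=i(1,0)+j(\tfrac12,\tfrac{\sqrt3}{2})\in\mathbb{R}^2$, and two vertices are adjacent iff their Euclidean distance is $1$. Let $V_n=\{v(i,j)\mid |i|,|j|\le n\}$; the density of a code $C\subseteq V$ is $D(C)=\limsup_{n\to\infty}|C\cap V_n|/|V_n|$. $N[v]$ is the closed neighbourhood of $v$, and for a code (nonempty subset) $C$, $I(C;v)=N[v]\cap C$. A code $C$ is self-locating-dominating if for every $u\in V\setminus C$, $I(C;u)\ne\emptyset$ and $\bigcap_{c\in I(C;u)}N[c]=\{u\}$. A code $C$ is solid-locating-dominating if for all distinct $u,v\in V\setminus C$, $I(C;u)\setminus I(C;v)\neq\emptyset$. *)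

theory Defs
  imports Complex_Main "HOL-Library.Extended_Real" "HOL-Library.Liminf_Limsup"
begin

text \<open>Vertices of the infinite triangular grid are indexed by pairs (i,j) of integers;
  the vertex v(i,j) is the point i(1,0) + j(1/2, sqrt 3/2) of the plane (here as a complex number).
  The map v is injective, so we identify V with int x int.\<close>

type_synonym vtx = "int \<times> int"

definition tgpos :: "vtx \<Rightarrow> complex" where
  "tgpos p = of_int (fst p) + of_int (snd p) * Complex (1/2) (sqrt 3 / 2)"

definition tg_adj :: "vtx \<Rightarrow> vtx \<Rightarrow> bool" where
  "tg_adj p q \<longleftrightarrow> dist (tgpos p) (tgpos q) = 1"

definition cnbh :: "vtx \<Rightarrow> vtx set" where
  "cnbh v = {u. u = v \<or> tg_adj u v}"

definition Iset :: "vtx set \<Rightarrow> vtx \<Rightarrow> vtx set" where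
  "Iset C v = cnbh v \<inter> C"

definition Vbox :: "nat \<Rightarrow> vtx set" where
  "Vbox n = {(i, j). \<bar>i\<bar> \<le> int n \<and> \<bar>j\<bar> \<le> int n}"

definition density :: "vtx set \<Rightarrow> ereal" where
  "density C = limsup (\<lambda>n. ereal (real (card (C \<inter> Vbox n)) / real (card (Vbox n))))"

definition self_locating_dominating :: "vtx set \<Rightarrow> bool" where
  "self_locating_dominating C \<longleftrightarrow> C \<noteq> {} \<and>
     (\<forall>u. u \<notin> C \<longrightarrow> Iset C u \<noteq> {} \<and> (\<Inter>c\<in>Iset C u. cnbh c) = {u})"

definition solid_locating_dominating :: "vtx set \<Rightarrow> bool" where
  "solid_locating_dominating C \<longleftrightarrow> C \<noteq> {} \<and>
     (\<forall>u v. u \<notin> C \<longrightarrow> v \<notin> C \<longrightarrow> u \<noteq> v \<longrightarrow> Iset C u - Iset C v \<noteq> {})"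

end

theory Submission
  imports Defs "HOL-Real_Asymp.Real_Asymp"
begin

text \<open>Discharging argument for the lower bound. Every vertex u with I(C;u) nonempty sends the
  charge 1/|I(C;u)| to each codeword of I(C;u), so it sends out exactly 1. If C is
  solid-locating-dominating, at most one vertex is undominated, and a codeword c collects at most
  1 + 6/2 = 4: all vertices of N[c] send it at most 1, and all but one of them at most 1/2, since
  two distinct vertices of N[c] with I(C;u) = {c} contradict solidity. Hence
  |V_n| - 1 <= 4 |C \<inter> V_(n+1)|, which gives density at least 1/4. The code of even
  coordinates meets the box in about a quarter of the vertices, and every non-codeword is the
  midpoint of two codewords whose closed neighbourhoods meet only in it.\<close>

section \<open>Neighbourhoods in the triangular grid\<close>

lemma tg_adj_iff: "tg_adj (a, b) (c, d) \<longleftrightarrow> (a - c)^2 + (a - c) * (b - d) + (b - d)^2 = 1"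
proof -
  have diff: "tgpos (a, b) - tgpos (c, d) =
      Complex (real_of_int (a - c) + real_of_int (b - d) / 2) (real_of_int (b - d) * sqrt 3 / 2)"
    by (simp add: tgpos_def complex_eq_iff field_simps)
  have "(x + y / 2)^2 + (y * sqrt 3 / 2)^2 = x^2 + x * y + y^2" for x y :: real
    by (simp add: power2_eq_square field_simps)
  then have "dist (tgpos (a, b)) (tgpos (c, d)) =
      sqrt (real_of_int ((a - c)^2 + (a - c) * (b - d) + (b - d)^2))"
    by (simp add: dist_norm diff cmod_def)
  then show ?thesis
    unfolding tg_adj_def by (metis of_int_eq_1_iff real_sqrt_eq_1_iff)
qed

lemma eisenstein_norm_eq_1_iff:
  "(x::int)^2 + x * y + y^2 = 1 \<longleftrightarrow> (x, y) \<in> {(1, 0), (-1, 0), (0, 1), (0, -1), (1, -1), (-1, 1)}"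
proof
  assume norm: "x^2 + x * y + y^2 = 1"
  have "(2 * x + y)^2 + 3 * y^2 = 4" "(2 * y + x)^2 + 3 * x^2 = 4"
    using norm by (simp_all add: power2_eq_square algebra_simps)
  then have "y^2 \<le> 1" "x^2 \<le> 1"
    by (smt (verit) zero_le_power2)+
  then have "x \<in> {-1, 0, 1}" "y \<in> {-1, 0, 1}"
    by (auto simp: abs_square_le_1)
  then show "(x, y) \<in> {(1, 0), (-1, 0), (0, 1), (0, -1), (1, -1), (-1, 1)}"
    using norm by auto
qed auto

lemma cnbh_eq:
  "cnbh (i, j) = {(i, j), (i + 1, j), (i - 1, j), (i, j + 1), (i, j - 1), (i + 1, j - 1), (i - 1, j + 1)}"
proof (rule set_eqI)
  fix u :: vtx
  obtain a b where u: "u = (a, b)"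
    by fastforce
  have "tg_adj (a, b) (i, j) \<longleftrightarrow> (a - i, b - j) \<in> {(1, 0), (-1, 0), (0, 1), (0, -1), (1, -1), (-1, 1)}"
    unfolding tg_adj_iff eisenstein_norm_eq_1_iff ..
  also have "\<dots> \<longleftrightarrow>
      (a, b) \<in> {(i + 1, j), (i - 1, j), (i, j + 1), (i, j - 1), (i + 1, j - 1), (i - 1, j + 1)}"
    by (simp add: algebra_simps)
  finally show "u \<in> cnbh (i, j) \<longleftrightarrow>
      u \<in> {(i, j), (i + 1, j), (i - 1, j), (i, j + 1), (i, j - 1), (i + 1, j - 1), (i - 1, j + 1)}"
    unfolding u cnbh_def mem_Collect_eq by (simp only: insert_iff)
qed

lemma cnbh_sym: "u \<in> cnbh v \<longleftrightarrow> v \<in> cnbh u"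
  unfolding cnbh_def tg_adj_def by (auto simp: dist_commute)

lemma cnbh_self: "u \<in> cnbh u"
  unfolding cnbh_def by auto

lemma finite_cnbh: "finite (cnbh u)"
  by (cases u) (simp add: cnbh_eq)

lemma card_cnbh: "card (cnbh u) = 7"
  by (cases u) (simp add: cnbh_eq)

lemma finite_Iset: "finite (Iset C u)"
  unfolding Iset_def using finite_cnbh by blast

lemma mem_Iset_iff: "c \<in> Iset C u \<longleftrightarrow> c \<in> C \<and> u \<in> cnbh c"
  unfolding Iset_def using cnbh_sym by blast

lemma cnbh_antipodal_Int:
  "cnbh (i + 1, j) \<inter> cnbh (i - 1, j) = {(i, j)}"
  "cnbh (i, j + 1) \<inter> cnbh (i, j - 1) = {(i, j)}"
  "cnbh (i + 1, j - 1) \<inter> cnbh (i - 1, j + 1) = {(i, j)}"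
  by (auto simp: cnbh_eq)

lemma Vbox_eq: "Vbox n = {-int n..int n} \<times> {-int n..int n}"
  unfolding Vbox_def by auto

lemma finite_Vbox: "finite (Vbox n)"
  by (simp add: Vbox_eq)

lemma card_Vbox: "card (Vbox n) = (2 * n + 1)^2"
proof -
  have "card {-int n..int n} = 2 * n + 1"
    by simp
  then show ?thesis
    by (simp add: Vbox_eq card_cartesian_product power2_eq_square)
qed

lemma cnbh_subset_Vbox_Suc: "u \<in> Vbox n \<Longrightarrow> cnbh u \<subseteq> Vbox (Suc n)"
  by (cases u) (auto simp: cnbh_eq Vbox_def)

section \<open>Density\<close>

lemma density_eqI:
  assumes "(\<lambda>n. real (card (C \<inter> Vbox n)) / real (card (Vbox n))) \<longlonglongrightarrow> L"
  shows "density C = ereal L"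
  unfolding density_def by (rule lim_imp_Limsup) (simp_all add: assms lim_ereal)

lemma density_geI:
  assumes "\<forall>\<^sub>F n in sequentially. b n \<le> real (card (C \<inter> Vbox n)) / real (card (Vbox n))"
    and "b \<longlonglongrightarrow> L"
  shows "density C \<ge> ereal L"
proof -
  have "limsup (\<lambda>n. ereal (b n)) = ereal L"
    using assms(2) by (intro lim_imp_Limsup) (simp_all add: lim_ereal)
  moreover have "limsup (\<lambda>n. ereal (b n)) \<le> density C"
    unfolding density_def by (rule Limsup_mono) (use assms(1) in \<open>simp add: eventually_mono\<close>)
  ultimately show ?thesis
    by simp
qed

section \<open>Locating-dominating codes\<close>

lemma self_locating_dominating_imp_solid:
  assumes self: "self_locating_dominating C"
  shows "solid_locating_dominating C"
  unfolding solid_locating_dominating_def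
proof (intro conjI allI impI)
  show "C \<noteq> {}"
    using self unfolding self_locating_dominating_def by blast
  fix u v
  assume uv: "u \<notin> C" "v \<notin> C" "u \<noteq> v"
  show "Iset C u - Iset C v \<noteq> {}"
  proof
    assume "Iset C u - Iset C v = {}"
    then have "(\<Inter>c\<in>Iset C v. cnbh c) \<subseteq> (\<Inter>c\<in>Iset C u. cnbh c)"
      by blast
    moreover have "v \<in> (\<Inter>c\<in>Iset C v. cnbh c)"
      by (simp add: mem_Iset_iff)
    moreover have "(\<Inter>c\<in>Iset C u. cnbh c) = {u}"
      using self uv(1) unfolding self_locating_dominating_def by blast
    ultimately show False
      using uv(3) by (metis singletonD subsetD)
  qed
qed

lemma solid_undominated_unique:
  assumes "solid_locating_dominating C" "Iset C u = {}" "Iset C v = {}"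
  shows "u = v"
proof -
  have "u \<notin> C" "v \<notin> C"
    using assms(2,3) cnbh_self unfolding Iset_def by blast+
  then show ?thesis
    using assms unfolding solid_locating_dominating_def by blast
qed

lemma solid_Iset_eq_singleton_unique:
  assumes solid: "solid_locating_dominating C"
    and u: "u \<in> cnbh c" "Iset C u = {c}" and v: "v \<in> cnbh c" "Iset C v = {c}"
  shows "u = v"
proof -
  have "c \<in> C"
    using u(2) unfolding Iset_def by blast
  have non_codeword: "w \<notin> C" if "Iset C w = {c}" "w \<noteq> c" for w
    using that cnbh_self[of w] unfolding Iset_def by blast
  have separated: "w = x" if "x \<in> cnbh c" "w \<notin> C" "x \<notin> C" "Iset C w = {c}" for w x
  proof -
    have "Iset C w - Iset C x = {}"
      using that(1,4) \<open>c \<in> C\<close> by (simp add: mem_Iset_iff)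
    then show ?thesis
      using solid that(2,3) unfolding solid_locating_dominating_def by blast
  qed
  text \<open>If c has no other codeword in N[c], a third vertex of N[c] cannot be separated from w.\<close>
  have lonely_center: "w = c" if w: "w \<in> cnbh c" "Iset C w = {c}" and Ic: "Iset C c = {c}" for w
  proof (rule ccontr)
    assume "w \<noteq> c"
    have "card (cnbh c - {c, w}) = 5"
      using w(1) cnbh_self[of c] \<open>w \<noteq> c\<close> by (simp add: card_cnbh card_Diff_subset)
    then have "cnbh c - {c, w} \<noteq> {}"
      by (metis card.empty zero_neq_numeral)
    then obtain x where x: "x \<in> cnbh c" "x \<noteq> c" "x \<noteq> w"
      by blast
    have "x \<notin> C"
      using x Ic unfolding Iset_def by blast
    then show False
      using separated[OF x(1) non_codeword[OF w(2) \<open>w \<noteq> c\<close>] _ w(2)] x(3) by blast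
  qed
  show ?thesis
  proof (cases "u = c \<or> v = c")
    case True
    then show ?thesis
      using lonely_center[OF u] lonely_center[OF v] u(2) v(2) by auto
  next
    case False
    then show ?thesis
      using separated[OF v(1) non_codeword[OF u(2)] non_codeword[OF v(2)] u(2)] by blast
  qed
qed

lemma sum_le_one_plus_half:
  fixes f :: "'a \<Rightarrow> real"
  assumes "finite S" "card S = Suc k" "\<forall>x\<in>S. f x \<le> 1" "\<forall>x\<in>S - {a}. f x \<le> 1/2"
  shows "sum f S \<le> 1 + k / 2"
proof (cases "a \<in> S")
  case True
  have "sum f (S - {a}) \<le> real (card (S - {a})) * (1/2)"
    using assms(4) by (intro sum_bounded_above) auto
  moreover have "sum f S = f a + sum f (S - {a})"
    using True assms(1) by (simp add: sum.remove)
  moreover have "f a \<le> 1"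
    using True assms(3) by blast
  ultimately show ?thesis
    using True assms(1,2) by simp
next
  case False
  then have "sum f S \<le> real (card S) * (1/2)"
    using assms(4) by (intro sum_bounded_above) auto
  then show ?thesis
    using assms(2) by simp
qed

lemma solid_card_Iset_ge_2_but_one:
  assumes solid: "solid_locating_dominating C" and "c \<in> C"
  obtains a where "\<And>x. x \<in> cnbh c \<Longrightarrow> x \<noteq> a \<Longrightarrow> card (Iset C x) \<ge> 2"
proof -
  have c_mem: "c \<in> Iset C x" if "x \<in> cnbh c" for x
    using that \<open>c \<in> C\<close> by (simp add: mem_Iset_iff)
  obtain a where a: "\<And>x. x \<in> cnbh c \<Longrightarrow> x \<noteq> a \<Longrightarrow> Iset C x \<noteq> {c}"
  proof (cases "\<exists>u\<in>cnbh c. Iset C u = {c}")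
    case True
    then obtain u where u: "u \<in> cnbh c" "Iset C u = {c}"
      by blast
    show ?thesis
    proof (rule that[of u])
      fix x
      assume "x \<in> cnbh c" "x \<noteq> u"
      then show "Iset C x \<noteq> {c}"
        using solid_Iset_eq_singleton_unique[OF solid u, of x] by blast
    qed
  next
    case False
    then show ?thesis
      by (intro that[of c]) blast
  qed
  show ?thesis
  proof (rule that[of a])
    fix x
    assume x: "x \<in> cnbh c" "x \<noteq> a"
    obtain y where "y \<in> Iset C x" "y \<noteq> c"
      using a[OF x] c_mem[OF x(1)] by blast
    then show "card (Iset C x) \<ge> 2"
      using c_mem[OF x(1)] card_mono[OF finite_Iset[of C x], of "{c, y}"] by simp
  qed
qed

lemma solid_charge_received_le_4:
  assumes solid: "solid_locating_dominating C" and "c \<in> C"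
  shows "(\<Sum>u\<in>cnbh c. 1 / real (card (Iset C u))) \<le> 4"
proof -
  obtain a where a: "\<And>x. x \<in> cnbh c \<Longrightarrow> x \<noteq> a \<Longrightarrow> card (Iset C x) \<ge> 2"
    using solid_card_Iset_ge_2_but_one[OF assms] by blast
  have "(\<Sum>u\<in>cnbh c. 1 / real (card (Iset C u))) \<le> 1 + real 6 / 2"
  proof (intro sum_le_one_plus_half[where a = a] finite_cnbh ballI)
    show "card (cnbh c) = Suc 6"
      by (simp add: card_cnbh)
  next
    fix x
    assume "x \<in> cnbh c"
    then have "c \<in> Iset C x"
      using \<open>c \<in> C\<close> by (simp add: mem_Iset_iff)
    then have "1 \<le> real (card (Iset C x))"
      using card_mono[OF finite_Iset[of C x], of "{c}"] by simp
    then show "1 / real (card (Iset C x)) \<le> 1"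
      by simp
  next
    fix x
    assume "x \<in> cnbh c - {a}"
    then have "2 \<le> real (card (Iset C x))"
      using a by simp
    then show "1 / real (card (Iset C x)) \<le> 1/2"
      by (simp add: divide_le_eq)
  qed
  then show ?thesis
    by simp
qed

lemma solid_card_le_Suc_card_dominated:
  assumes solid: "solid_locating_dominating C" and "finite B"
  shows "card B \<le> Suc (card {u\<in>B. Iset C u \<noteq> {}})"
proof -
  have "card {u\<in>B. Iset C u = {}} \<le> 1"
    using solid_undominated_unique[OF solid] \<open>finite B\<close> by (simp add: card_le_Suc0_iff_eq)
  moreover have "card B \<le> card ({u\<in>B. Iset C u \<noteq> {}} \<union> {u\<in>B. Iset C u = {}})"
    using \<open>finite B\<close> by (intro card_mono) auto
  moreover have "\<dots> \<le> card {u\<in>B. Iset C u \<noteq> {}} + card {u\<in>B. Iset C u = {}}"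
    by (rule card_Un_le)
  ultimately show ?thesis
    by linarith
qed

lemma solid_card_Vbox_le:
  assumes solid: "solid_locating_dominating C"
  shows "real (card (Vbox n)) - 1 \<le> 4 * real (card (C \<inter> Vbox (Suc n)))"
proof -
  let ?B = "Vbox n" and ?D = "C \<inter> Vbox (Suc n)"
  let ?charge = "\<lambda>u. 1 / real (card (Iset C u))"
  have "card ?B \<le> Suc (card {u\<in>?B. Iset C u \<noteq> {}})"
    using solid_card_le_Suc_card_dominated[OF solid finite_Vbox] .
  then have "real (card ?B) - 1 \<le> real (card {u\<in>?B. Iset C u \<noteq> {}})"
    by simp
  also have "\<dots> = (\<Sum>u\<in>?B. if Iset C u \<noteq> {} then 1 else 0)"
    using sum.inter_filter[OF finite_Vbox, of "\<lambda>_. 1::real"] by simp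
  also have "\<dots> = (\<Sum>u\<in>?B. \<Sum>c\<in>Iset C u. ?charge u)"
    using finite_Iset by (intro sum.cong) auto
  also have "\<dots> = (\<Sum>u\<in>?B. \<Sum>c\<in>{c. c \<in> ?D \<and> u \<in> cnbh c}. ?charge u)"
  proof (intro sum.cong refl)
    fix u
    assume "u \<in> ?B"
    then show "Iset C u = {c. c \<in> ?D \<and> u \<in> cnbh c}"
      using cnbh_subset_Vbox_Suc cnbh_sym[of u] unfolding Iset_def by blast
  qed
  also have "\<dots> = (\<Sum>c\<in>?D. \<Sum>u\<in>{u. u \<in> ?B \<and> u \<in> cnbh c}. ?charge u)"
    by (rule sum.swap_restrict) (simp_all add: finite_Vbox)
  also have "\<dots> \<le> (\<Sum>c\<in>?D. \<Sum>u\<in>cnbh c. ?charge u)"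
    by (intro sum_mono sum_mono2 finite_cnbh) auto
  also have "\<dots> \<le> (\<Sum>c\<in>?D. 4)"
    using solid_charge_received_le_4[OF solid] by (intro sum_mono) blast
  finally show ?thesis
    by simp
qed

lemma solid_density_ge:
  assumes "solid_locating_dominating C"
  shows "density C \<ge> ereal (1/4)"
proof (rule density_geI)
  show "(\<lambda>n. ((2 * real n - 1)^2 - 1) / 4 / (2 * real n + 1)^2) \<longlonglongrightarrow> 1/4"
    by real_asymp
  show "\<forall>\<^sub>F n in sequentially. ((2 * real n - 1)^2 - 1) / 4 / (2 * real n + 1)^2
      \<le> real (card (C \<inter> Vbox n)) / real (card (Vbox n))"
    unfolding eventually_sequentially
  proof (intro exI allI impI)
    fix n :: nat
    assume "1 \<le> n"
    then obtain m where n: "n = Suc m"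
      by (cases n) auto
    have "real (card (Vbox m)) - 1 \<le> 4 * real (card (C \<inter> Vbox n))"
      using solid_card_Vbox_le[OF assms, of m] n by simp
    moreover have "real (card (Vbox m)) = (2 * real n - 1)^2"
      unfolding card_Vbox n by simp
    ultimately have "((2 * real n - 1)^2 - 1) / 4 \<le> real (card (C \<inter> Vbox n))"
      by simp
    then have "((2 * real n - 1)^2 - 1) / 4 / (2 * real n + 1)^2
        \<le> real (card (C \<inter> Vbox n)) / (2 * real n + 1)^2"
      by (intro divide_right_mono) simp_all
    moreover have "real (card (Vbox n)) = (2 * real n + 1)^2"
      by (simp add: card_Vbox)
    ultimately show "((2 * real n - 1)^2 - 1) / 4 / (2 * real n + 1)^2
        \<le> real (card (C \<inter> Vbox n)) / real (card (Vbox n))"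
      by simp
  qed
qed

section \<open>The code of even coordinates\<close>

definition even_code :: "vtx set" where
  "even_code = {(i, j). even i \<and> even j}"

lemma even_code_Iset:
  assumes "(i, j) \<notin> even_code"
  obtains p q where "Iset even_code (i, j) = {p, q}" and "cnbh p \<inter> cnbh q = {(i, j)}"
proof -
  consider "odd i" "even j" | "even i" "odd j" | "odd i" "odd j"
    using assms unfolding even_code_def by auto
  then show ?thesis
  proof cases
    case 1
    then show ?thesis
      by (intro that[of "(i + 1, j)" "(i - 1, j)"] cnbh_antipodal_Int(1))
        (auto simp: Iset_def cnbh_eq even_code_def)
  next
    case 2
    then show ?thesis
      by (intro that[of "(i, j + 1)" "(i, j - 1)"] cnbh_antipodal_Int(2))
        (auto simp: Iset_def cnbh_eq even_code_def)
  next
    case 3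
    then show ?thesis
      by (intro that[of "(i + 1, j - 1)" "(i - 1, j + 1)"] cnbh_antipodal_Int(3))
        (auto simp: Iset_def cnbh_eq even_code_def)
  qed
qed

lemma self_locating_dominating_even_code: "self_locating_dominating even_code"
  unfolding self_locating_dominating_def
proof (intro conjI allI impI)
  show "even_code \<noteq> {}"
    unfolding even_code_def by blast
  fix u
  assume "u \<notin> even_code"
  obtain i j where u: "u = (i, j)"
    by fastforce
  obtain p q where "Iset even_code u = {p, q}" "cnbh p \<inter> cnbh q = {u}"
    using \<open>u \<notin> even_code\<close> unfolding u by (rule even_code_Iset)
  then show "Iset even_code u \<noteq> {}" "(\<Inter>c\<in>Iset even_code u. cnbh c) = {u}"
    by auto
qed

lemma card_even_abs_le: "card {i::int. even i \<and> \<bar>i\<bar> \<le> int n} = 2 * (n div 2) + 1"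
proof -
  define m where "m = int (n div 2)"
  have "{i::int. even i \<and> \<bar>i\<bar> \<le> int n} = (\<lambda>k. 2 * k) ` {-m..m}"
  proof (intro set_eqI iffI)
    fix i
    assume "i \<in> {i. even i \<and> \<bar>i\<bar> \<le> int n}"
    then obtain k where "i = 2 * k" "\<bar>2 * k\<bar> \<le> int n"
      by (auto elim: evenE)
    moreover from this(2) have "\<bar>k\<bar> \<le> m"
      unfolding m_def by (simp add: zdiv_int[symmetric])
    ultimately show "i \<in> (\<lambda>k. 2 * k) ` {-m..m}"
      by (intro image_eqI[of _ _ k]) auto
  next
    fix i
    assume "i \<in> (\<lambda>k. 2 * k) ` {-m..m}"
    then obtain k where "i = 2 * k" "\<bar>k\<bar> \<le> m"
      by auto
    moreover from this(2) have "\<bar>2 * k\<bar> \<le> int n"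
      unfolding m_def by (simp add: zdiv_int[symmetric])
    ultimately show "i \<in> {i. even i \<and> \<bar>i\<bar> \<le> int n}"
      by auto
  qed
  then show ?thesis
    by (simp add: card_image inj_on_def m_def)
qed

lemma card_even_code_Vbox: "card (even_code \<inter> Vbox n) = (2 * (n div 2) + 1)^2"
proof -
  have "even_code \<inter> Vbox n = {i. even i \<and> \<bar>i\<bar> \<le> int n} \<times> {i. even i \<and> \<bar>i\<bar> \<le> int n}"
    unfolding even_code_def Vbox_def by auto
  then show ?thesis
    by (simp add: card_cartesian_product card_even_abs_le power2_eq_square)
qed

lemma density_even_code: "density even_code = ereal (1/4)"
proof (rule density_eqI)
  define r where "r n = (2 * real (n div 2) + 1)^2 / (2 * real n + 1)^2" for n
  have ratio: "real (card (even_code \<inter> Vbox n)) / real (card (Vbox n)) = r n" for n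
    unfolding card_even_code_Vbox card_Vbox r_def by (simp add: add.commute)
  have lower: "real n ^ 2 / (2 * real n + 1)^2 \<le> r n" for n
  proof -
    have "real n \<le> 2 * real (n div 2) + 1"
      by linarith
    then have "real n ^ 2 \<le> (2 * real (n div 2) + 1)^2"
      by (rule power_mono) simp
    then show ?thesis
      unfolding r_def by (rule divide_right_mono) simp
  qed
  have upper: "r n \<le> (real n + 1)^2 / (2 * real n + 1)^2" for n
  proof -
    have "2 * real (n div 2) + 1 \<le> real n + 1"
      by linarith
    then have "(2 * real (n div 2) + 1)^2 \<le> (real n + 1)^2"
      by (rule power_mono) simp
    then show ?thesis
      unfolding r_def by (rule divide_right_mono) simp
  qed
  have lim_lower: "(\<lambda>n. real n ^ 2 / (2 * real n + 1)^2) \<longlonglongrightarrow> 1/4"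
    and lim_upper: "(\<lambda>n. (real n + 1)^2 / (2 * real n + 1)^2) \<longlonglongrightarrow> 1/4"
    by real_asymp+
  have "r \<longlonglongrightarrow> 1/4"
    using lower upper
    by (intro tendsto_sandwich[OF always_eventually always_eventually lim_lower lim_upper]) auto
  then show "(\<lambda>n. real (card (even_code \<inter> Vbox n)) / real (card (Vbox n))) \<longlonglongrightarrow> 1/4"
    unfolding ratio .
qed

theorem theorem7:
  defines "C0 \<equiv> {(i, j). even i \<and> even j}"
  shows "self_locating_dominating C0 \<and> solid_locating_dominating C0 \<and>
         density C0 = ereal (1/4) \<and>
         (\<forall>C. self_locating_dominating C \<longrightarrow> density C \<ge> ereal (1/4)) \<and>
         (\<forall>C. solid_locating_dominating C \<longrightarrow> density C \<ge> ereal (1/4))"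
proof -
  have C0: "C0 = even_code"
    unfolding C0_def even_code_def ..
  show ?thesis
    unfolding C0
    using self_locating_dominating_even_code self_locating_dominating_imp_solid
      density_even_code solid_density_ge by blast
qed

end
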